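(* Let $G$ be a finite connected undirected graph with vertices $v_1,\dots,v_n$ whose adjacency matrix $A(G)$ has Perron–Frobenius eigenvalue $\lambda_1>0$ with $|\mu|<\lambda_1$ for every other eigenvalue $\mu$. Let $\Gamma$ be a finite group, $\gamma:V(G)\to\Gamma$, $t_m=\gamma(v_m)$, and suppose $t_1,\dots,t_n$ generate $\Gamma$. Let $\rho$ be a nontrivial irreducible unitary representation of $\Gamma$ of dimension $k$, and assume it is not the case that $\rho$ is one-dimensional with $\rho(t_1)=\rho(t_2)=\dots=\rho(t_n)$. Let $U_\rho=\mathrm{diag}(\rho(t_1),\dots,\rho(t_n))$ and $A_\rho=A(G)\otimes I_k$. Then the spectral radius of $U_\rho A_\rho$ is strictly smaller than $\lambda_1$; consequently $\|(U_\rho A_\rho)^N\|_{op}/|W_{N,i,j}|\to0$ as $N\to\infty$ for all $i,j$.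
   Context: $W_{N,i,j}$ is the set of walks of length $N$ in $G$ from $v_i$ to $v_j$ (sequences $w_0=v_i,\dots,w_N=v_j$ of consecutively adjacent vertices, counted with multiplicity). $\|\cdot\|_{op}$ is the operator norm. *)

theory Defs
  imports "HOL-Analysis.Analysis" "HOL-Algebra.Generated_Groups"
begin

definition simple_graph :: "('n \<Rightarrow> 'n \<Rightarrow> bool) \<Rightarrow> bool" where
  "simple_graph E \<longleftrightarrow> (\<forall>u v. E u v \<longleftrightarrow> E v u) \<and> (\<forall>v. \<not> E v v)"

definition walks :: "('n \<Rightarrow> 'n \<Rightarrow> bool) \<Rightarrow> nat \<Rightarrow> 'n \<Rightarrow> 'n \<Rightarrow> 'n list set" where
  "walks E N i j = {ws. length ws = Suc N \<and> ws ! 0 = i \<and> ws ! N = j \<and>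
                        (\<forall>m<N. E (ws ! m) (ws ! Suc m))}"

definition graph_connected :: "('n \<Rightarrow> 'n \<Rightarrow> bool) \<Rightarrow> bool" where
  "graph_connected E \<longleftrightarrow> (\<forall>i j. \<exists>N. walks E N i j \<noteq> {})"

definition adjacency :: "('n::finite \<Rightarrow> 'n \<Rightarrow> bool) \<Rightarrow> complex^'n^'n" where
  "adjacency E = (\<chi> i j. if E i j then 1 else 0)"

definition is_eigenvalue :: "complex^'m^'m \<Rightarrow> complex \<Rightarrow> bool" where
  "is_eigenvalue M \<mu> \<longleftrightarrow> (\<exists>v. v \<noteq> 0 \<and> M *v v = \<mu> *s v)"

definition spec_radius :: "complex^'m^'m \<Rightarrow> real" where
  "spec_radius M = Max {cmod \<mu> | \<mu>. is_eigenvalue M \<mu>}"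

fun mat_pow :: "'a::comm_ring_1^'m^'m \<Rightarrow> nat \<Rightarrow> 'a^'m^'m" where
  "mat_pow M 0 = mat 1"
| "mat_pow M (Suc N) = M ** mat_pow M N"

definition op_norm :: "complex^'m^'m \<Rightarrow> real" where
  "op_norm M = onorm (\<lambda>x. M *v x)"

definition conj_transpose :: "complex^'k^'k \<Rightarrow> complex^'k^'k" where
  "conj_transpose M = (\<chi> i j. cnj (M $ j $ i))"

definition unitary_mat :: "complex^'k^'k \<Rightarrow> bool" where
  "unitary_mat M \<longleftrightarrow> M ** conj_transpose M = mat 1 \<and> conj_transpose M ** M = mat 1"

definition csubspace_vec :: "(complex^'k) set \<Rightarrow> bool" where
  "csubspace_vec W \<longleftrightarrow> 0 \<in> W \<and> (\<forall>x\<in>W. \<forall>y\<in>W. x + y \<in> W) \<and> (\<forall>c. \<forall>x\<in>W. c *s x \<in> W)"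

definition unitary_rep :: "('g, 'b) monoid_scheme \<Rightarrow> ('g \<Rightarrow> complex^'k^'k) \<Rightarrow> bool" where
  "unitary_rep G \<rho> \<longleftrightarrow> (\<forall>g\<in>carrier G. unitary_mat (\<rho> g)) \<and>
     (\<forall>g\<in>carrier G. \<forall>h\<in>carrier G. \<rho> (g \<otimes>\<^bsub>G\<^esub> h) = \<rho> g ** \<rho> h)"

definition irreducible_rep :: "('g, 'b) monoid_scheme \<Rightarrow> ('g \<Rightarrow> complex^'k^'k) \<Rightarrow> bool" where
  "irreducible_rep G \<rho> \<longleftrightarrow> unitary_rep G \<rho> \<and>
     (\<forall>W. csubspace_vec W \<and> (\<forall>g\<in>carrier G. \<forall>w\<in>W. \<rho> g *v w \<in> W)
          \<longrightarrow> W = {0} \<or> W = UNIV)"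

definition trivial_rep :: "('g, 'b) monoid_scheme \<Rightarrow> ('g \<Rightarrow> complex^'k^'k) \<Rightarrow> bool" where
  "trivial_rep G \<rho> \<longleftrightarrow> (\<forall>g\<in>carrier G. \<rho> g = mat 1)"

text \<open>U_rho A_rho with U_rho = diag(rho(t_1),...,rho(t_n)), A_rho = A(G) \<otimes> I_k,
  indexed by pairs (vertex, representation coordinate).\<close>

definition twisted_adj ::
  "('n::finite \<Rightarrow> 'n \<Rightarrow> bool) \<Rightarrow> ('n \<Rightarrow> complex^'k^'k) \<Rightarrow> complex^('n \<times> 'k)^('n \<times> 'k)" where
  "twisted_adj E R = (\<chi> p q. R (fst p) $ snd p $ snd q * adjacency E $ fst p $ fst q)"

end

theory Submission
  imports Defs "Jordan_Normal_Form.Spectral_Radius"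
begin

(*
  Write an eigenvector of U_rho A_rho for the eigenvalue mu in blocks x_v in C^k, one per
  vertex. As the rho(t_v) are unitary, |mu| |x_v| <= sum of |x_w| over the neighbours w of v,
  so the vector of block norms is subinvariant for A(G), and the Collatz-Wielandt bound
  (obtained from the Rayleigh quotient of the symmetric matrix A(G)) gives |mu| <= lambda_1.
  If |mu| = lambda_1, the block norms form a positive Perron vector y, all these triangle
  inequalities are equalities, and since -lambda_1 is not an eigenvalue, connectivity forces
  x_v = y_v z for a single vector z with rho(t_v) z = (mu / lambda_1) z for all v. The line
  spanned by z is then invariant under the group generated by the t_v, so irreducibility gives
  k = 1 and all rho(t_v) coincide, which is excluded.

  For the limit, the Jordan normal form bounds |(U_rho A_rho)^N| by C r^N for every r above
  the spectral radius, whereas the number of walks (A^N)_ij is asymptotic to c lambda_1^N with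
  c = y_i y_j / |y|^2 > 0, by the spectral gap of A(G) on the orthogonal complement of y.
*)

no_notation Matrix.vec_index (infixl "$" 100)
no_notation Matrix.scalar_prod (infix "\<bullet>" 70)
hide_const (open) VectorSpace.subspace Matrix.mat Matrix.vec

section \<open>Rayleigh quotients of real symmetric matrices\<close>

lemma inner_symmetric_matrix:
  fixes B :: "real^'n^'n"
  assumes "transpose B = B"
  shows "w \<bullet> (B *v v) = (B *v w) \<bullet> v"
  by (metis assms dot_lmul_matrix vector_transpose_matrix)

lemma norm_mult_vec_sq_symmetric:
  fixes A :: "real^'n^'n"
  assumes "transpose A = A"
  shows "(norm (A *v w))\<^sup>2 = w \<bullet> ((A ** A) *v w)"
  using inner_symmetric_matrix[OF assms, of w "A *v w"]
  by (simp add: matrix_vector_mul_assoc[symmetric] dot_square_norm)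

lemma quadratic_nonneg_imp_linear_coeff_eq_0:
  fixes a b :: real
  assumes nonneg: "\<And>t. 0 \<le> a * t + b * t\<^sup>2"
  shows "a = 0"
proof (rule ccontr)
  assume "a \<noteq> 0"
  define s where "s = \<bar>b\<bar> + 1"
  have s: "0 < s" "b < s" by (auto simp: s_def)
  define t where "t = - a / s"
  have "a * t + b * t\<^sup>2 = - (a\<^sup>2 * (1 - b / s) / s)"
    using s by (simp add: t_def field_simps power2_eq_square)
  moreover have "0 < a\<^sup>2 * (1 - b / s) / s"
    using \<open>a \<noteq> 0\<close> s by (intro divide_pos_pos mult_pos_pos) auto
  ultimately have "a * t + b * t\<^sup>2 < 0" by simp
  with nonneg[of t] show False by simp
qed

lemma rayleigh_maximizer_eigenvector:
  fixes B :: "real^'n^'n"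
  assumes sym: "transpose B = B" and V: "subspace V"
    and inv: "\<And>w. w \<in> V \<Longrightarrow> B *v w \<in> V"
    and le: "\<And>w. w \<in> V \<Longrightarrow> w \<bullet> (B *v w) \<le> m * (w \<bullet> w)"
    and v: "v \<in> V" and eq: "v \<bullet> (B *v v) = m * (v \<bullet> v)"
  shows "B *v v = m *\<^sub>R v"
proof -
  define d where "d = m *\<^sub>R v - B *v v"
  have dV: "d \<in> V" unfolding d_def by (intro subspace_diff subspace_scale V v inv)
  have vBd: "v \<bullet> (B *v d) = d \<bullet> (B *v v)"
    using inner_symmetric_matrix[OF sym, of v d] by (simp add: inner_commute)
  \<comment> \<open>?Q is nonnegative on V and vanishes at v, so its derivative 2 (d \<bullet> d) at v along d vanishes.\<close>
  let ?Q = "\<lambda>w. m * (w \<bullet> w) - w \<bullet> (B *v w)"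
  have Qv: "?Q v = 0" using eq by simp
  have Qdv: "m * (d \<bullet> v) - d \<bullet> (B *v v) = d \<bullet> d"
    using inner_diff_right[of d "m *\<^sub>R v" "B *v v"] by (simp add: d_def[symmetric])
  have "0 \<le> 2 * (d \<bullet> d) * t + ?Q d * t\<^sup>2" for t
  proof -
    have "v + t *\<^sub>R d \<in> V" using V v dV by (simp add: subspace_add subspace_scale)
    then have "0 \<le> ?Q (v + t *\<^sub>R d)" using le by simp
    moreover have "v \<bullet> d = d \<bullet> v" by (rule inner_commute)
    then have "?Q (v + t *\<^sub>R d) = ?Q v + 2 * t * (m * (d \<bullet> v) - d \<bullet> (B *v v)) + t\<^sup>2 * ?Q d"
      using vBd by (simp add: matrix_vector_right_distrib matrix_vector_mult_scaleR
          inner_add_left inner_add_right power2_eq_square algebra_simps)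
    ultimately show ?thesis unfolding Qv Qdv by (simp add: mult_ac)
  qed
  then have "2 * (d \<bullet> d) = 0" by (rule quadratic_nonneg_imp_linear_coeff_eq_0)
  then show ?thesis by (simp add: d_def)
qed

lemma symmetric_matrix_rayleigh_max:
  fixes B :: "real^'n^'n"
  assumes sym: "transpose B = B" and V: "subspace V"
    and inv: "\<And>w. w \<in> V \<Longrightarrow> B *v w \<in> V" and "V \<noteq> {0}"
  obtains v m where "v \<in> V" "v \<noteq> 0" "B *v v = m *\<^sub>R v"
    "\<And>w. w \<in> V \<Longrightarrow> w \<bullet> (B *v w) \<le> m * (w \<bullet> w)"
proof -
  let ?S = "V \<inter> sphere 0 1" and ?q = "\<lambda>w. w \<bullet> (B *v w)"
  obtain v0 where "v0 \<in> V" "v0 \<noteq> 0" using \<open>V \<noteq> {0}\<close> subspace_0[OF V] by blast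
  then have "(1 / norm v0) *\<^sub>R v0 \<in> ?S" using V by (simp add: subspace_scale)
  moreover have "compact ?S" using closed_subspace[OF V] by (intro closed_Int_compact compact_sphere)
  moreover have "continuous_on ?S ?q" by (intro continuous_intros)
  ultimately obtain v where vS: "v \<in> ?S" and vmax: "\<And>w. w \<in> ?S \<Longrightarrow> ?q w \<le> ?q v"
    using continuous_attains_sup[of ?S ?q] by blast
  define m where "m = ?q v"
  have le: "?q w \<le> m * (w \<bullet> w)" if w: "w \<in> V" for w
  proof (cases "w = 0")
    case False
    define c where "c = 1 / norm w"
    have "c *\<^sub>R w \<in> ?S" using w V False by (simp add: c_def subspace_scale)
    then have "?q (c *\<^sub>R w) \<le> m" unfolding m_def by (rule vmax)
    then have "c * c * ?q w \<le> m" by (simp add: matrix_vector_mult_scaleR mult.assoc)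
    moreover have "c * c = 1 / (w \<bullet> w)" using False by (simp add: c_def dot_square_norm power2_eq_square)
    moreover have "0 < w \<bullet> w" using False by simp
    ultimately show ?thesis by (simp add: field_simps)
  qed simp
  have "v \<bullet> v = 1" using vS by (simp add: dot_square_norm)
  then have "B *v v = m *\<^sub>R v"
    using vS by (intro rayleigh_maximizer_eigenvector[OF sym V inv le]) (auto simp: m_def)
  with vS le show ?thesis by (intro that[of v m]) auto
qed

lemma of_real_norm_sq_vec:
  "complex_of_real ((norm (v :: complex^'k))\<^sup>2) = (\<Sum>a\<in>UNIV. v $ a * cnj (v $ a))"
proof -
  have "(norm v)\<^sup>2 = (\<Sum>a\<in>UNIV. (cmod (v $ a))\<^sup>2)"
    by (simp add: norm_vec_def L2_set_def sum_nonneg)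
  then have "complex_of_real ((norm v)\<^sup>2) = (\<Sum>a\<in>UNIV. complex_of_real ((cmod (v $ a))\<^sup>2))"
    by (simp only: of_real_sum)
  then show ?thesis by (simp only: complex_norm_square)
qed

lemma unitary_mat_norm_mult_vec:
  assumes "unitary_mat U"
  shows "norm (U *v x) = norm (x :: complex^'k)"
proof -
  have UU: "(\<Sum>a\<in>UNIV. cnj (U $ a $ c) * U $ a $ b) = of_bool (c = b)" for b c
  proof -
    have "(conj_transpose U ** U) $ c $ b = of_bool (c = b)"
      using assms by (simp add: unitary_mat_def Finite_Cartesian_Product.mat_def)
    then show ?thesis by (simp add: matrix_matrix_mult_def conj_transpose_def)
  qed
  have "complex_of_real ((norm (U *v x))\<^sup>2)
      = (\<Sum>a\<in>UNIV. \<Sum>b\<in>UNIV. \<Sum>c\<in>UNIV. U $ a $ b * x $ b * (cnj (U $ a $ c) * cnj (x $ c)))"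
    unfolding of_real_norm_sq_vec by (simp add: matrix_vector_mult_def cnj_sum sum_product)
  also have "\<dots> = (\<Sum>b\<in>UNIV. \<Sum>c\<in>UNIV. x $ b * cnj (x $ c) * (\<Sum>a\<in>UNIV. cnj (U $ a $ c) * U $ a $ b))"
    by (subst sum.swap, rule sum.cong[OF refl], subst sum.swap) (simp add: sum_distrib_left mult_ac)
  also have "\<dots> = complex_of_real ((norm x)\<^sup>2)"
    unfolding of_real_norm_sq_vec by (simp add: UU)
  finally have "(norm (U *v x))\<^sup>2 = (norm x)\<^sup>2" by (simp only: of_real_eq_iff)
  then show ?thesis by (simp add: power2_eq_iff_nonneg)
qed

lemma norm_sum_eq_sum_norm_imp_parallel:
  fixes f :: "'i \<Rightarrow> 'a::real_inner"
  assumes "finite J" and eq: "norm (sum f J) = (\<Sum>j\<in>J. norm (f j))" and "j \<in> J"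
  shows "norm (sum f J) *\<^sub>R f j = norm (f j) *\<^sub>R sum f J"
proof -
  let ?S = "sum f J"
  have gap_nonneg: "0 \<le> norm (f i) * norm ?S - f i \<bullet> ?S" for i
    using norm_cauchy_schwarz[of "f i" ?S] by simp
  have "(\<Sum>i\<in>J. norm (f i) * norm ?S - f i \<bullet> ?S) = (\<Sum>i\<in>J. norm (f i)) * norm ?S - ?S \<bullet> ?S"
    by (simp add: sum_subtractf sum_distrib_right inner_sum_left)
  also have "\<dots> = 0" using eq by (simp add: dot_square_norm power2_eq_square)
  finally have "norm (f j) * norm ?S - f j \<bullet> ?S = 0"
    using gap_nonneg \<open>finite J\<close> \<open>j \<in> J\<close> by (simp add: sum_nonneg_eq_0_iff)
  then show ?thesis using norm_cauchy_schwarz_eq[of "f j" ?S] by simp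
qed

lemma norm_smult_vec: "norm (c *s (v :: complex^'k)) = cmod c * norm v"
  by (simp add: norm_vec_def norm_mult L2_set_right_distrib)

lemma scaleR_eq_smult_vec: "r *\<^sub>R (v :: complex^'k) = complex_of_real r *s v"
  unfolding Finite_Cartesian_Product.vec_eq_iff vector_scaleR_component vector_smult_component
  by (simp add: scaleR_conv_of_real)

lemma mat_pow_mult_vec_Suc: "mat_pow M (Suc N) *v x = M *v (mat_pow M N *v x)"
  by (simp add: matrix_vector_mul_assoc)

lemma mat_pow_eigenvector:
  fixes M :: "real^'n^'n"
  assumes "M *v v = c *\<^sub>R v"
  shows "mat_pow M N *v v = c ^ N *\<^sub>R v"
  by (induction N) (simp_all add: assms mat_pow_mult_vec_Suc matrix_vector_mult_scaleR del: mat_pow.simps(2))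

lemma mat_pow_Suc_right: "mat_pow M (Suc N) = mat_pow M N ** M"
  by (induction N) (simp_all add: matrix_mul_assoc)

lemma mat_pow_scaleR: "mat_pow (c *\<^sub>R A) N = c ^ N *\<^sub>R mat_pow (A :: complex^'m^'m) N"
  by (induction N) (simp_all add: scalar_matrix_assoc[symmetric] matrix_scalar_ac)

lemma op_norm_nonneg: "0 \<le> op_norm M"
  unfolding op_norm_def by (rule onorm_pos_le[OF matrix_vector_mul_bounded_linear])

lemma op_norm_le_entry_bound:
  fixes P :: "complex^'m^'m"
  assumes bound: "\<And>a b. cmod (P $ a $ b) \<le> B"
  shows "op_norm P \<le> real CARD('m) * real CARD('m) * B"
  unfolding op_norm_def
proof (rule onorm_le)
  fix x :: "complex^'m"
  have "norm ((P *v x) $ a) \<le> real CARD('m) * B * norm x" for a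
  proof -
    have "norm ((P *v x) $ a) \<le> (\<Sum>b\<in>UNIV. cmod (P $ a $ b) * norm (x $ b))"
      unfolding matrix_vector_mult_def by (simp add: sum_norm_le norm_mult)
    also have "\<dots> \<le> (\<Sum>b\<in>(UNIV :: 'm set). B * norm x)"
      using bound by (intro sum_mono mult_mono Finite_Cartesian_Product.norm_nth_le) (auto intro: order_trans[OF norm_ge_zero])
    finally show ?thesis by simp
  qed
  then have "(\<Sum>a\<in>UNIV. norm ((P *v x) $ a)) \<le> (\<Sum>a\<in>(UNIV :: 'm set). real CARD('m) * B * norm x)"
    by (intro sum_mono)
  moreover have "norm (P *v x) \<le> (\<Sum>a\<in>UNIV. norm ((P *v x) $ a))"
    unfolding norm_vec_def by (rule L2_set_le_sum) simp
  ultimately show "norm (P *v x) \<le> real CARD('m) * real CARD('m) * B * norm x"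
    by (simp add: mult_ac)
qed

section \<open>Spectral radius via Jordan normal forms\<close>

text \<open>Cartesian matrices are transferred to Jordan_Normal_Form, which bounds the powers of a
  matrix of spectral radius below 1.\<close>

definition enum_index :: "nat \<Rightarrow> 'm::finite" where
  "enum_index = (SOME h. bij_betw h {0..<CARD('m)} UNIV)"

lemma bij_betw_enum_index: "bij_betw (enum_index :: nat \<Rightarrow> 'm::finite) {0..<CARD('m)} UNIV"
proof -
  have "\<exists>h. bij_betw h {0..<CARD('m)} (UNIV :: 'm set)" by (rule ex_bij_betw_nat_finite) simp
  then show ?thesis unfolding enum_index_def by (rule someI_ex)
qed

lemma enum_index_eq_iff:
  "i < CARD('m::finite) \<Longrightarrow> j < CARD('m) \<Longrightarrow> (enum_index i :: 'm) = enum_index j \<longleftrightarrow> i = j"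
  using bij_betw_enum_index[where 'm='m] by (auto simp: bij_betw_def inj_on_def)

lemma enum_index_surj: obtains i where "i < CARD('m::finite)" "(enum_index i :: 'm) = b"
proof -
  have "b \<in> enum_index ` {0..<CARD('m)}"
    using bij_betw_enum_index[where 'm='m] by (simp add: bij_betw_def)
  with that show ?thesis by auto
qed

lemma sum_enum_index: "(\<Sum>i<CARD('m::finite). f (enum_index i :: 'm)) = (\<Sum>b\<in>UNIV. f b)"
  using sum.reindex_bij_betw[OF bij_betw_enum_index] by (simp add: lessThan_atLeast0)

definition to_jnf :: "'a^'m::finite^'m \<Rightarrow> 'a Matrix.mat" where
  "to_jnf M = Matrix.mat CARD('m) CARD('m) (\<lambda>(i, j). M $ enum_index i $ enum_index j)"

definition to_jnf_vec :: "'a^'m::finite \<Rightarrow> 'a Matrix.vec" where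
  "to_jnf_vec v = Matrix.vec CARD('m) (\<lambda>i. v $ enum_index i)"

lemma to_jnf_carrier [simp]: "to_jnf (M :: 'a^'m::finite^'m) \<in> carrier_mat CARD('m) CARD('m)"
  by (simp add: to_jnf_def)

lemma to_jnf_dim [simp]:
  "dim_row (to_jnf (M :: 'a^'m::finite^'m)) = CARD('m)" "dim_col (to_jnf M) = CARD('m)"
  by (simp_all add: to_jnf_def)

lemma to_jnf_vec_carrier [simp]: "to_jnf_vec (v :: 'a^'m::finite) \<in> carrier_vec CARD('m)"
  by (simp add: to_jnf_vec_def)

lemma to_jnf_vec_eq_iff: "to_jnf_vec v = to_jnf_vec w \<longleftrightarrow> v = (w :: 'a^'m::finite)"
proof
  assume eq: "to_jnf_vec v = to_jnf_vec w"
  show "v = w"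
  proof (subst Finite_Cartesian_Product.vec_eq_iff, intro allI)
    fix b :: 'm
    obtain i where "i < CARD('m)" "enum_index i = b" by (rule enum_index_surj)
    then show "v $ b = w $ b" using arg_cong[OF eq, of "\<lambda>u. vec_index u i"] by (simp add: to_jnf_vec_def)
  qed
qed simp

lemma to_jnf_vec_surj:
  assumes "w \<in> carrier_vec CARD('m::finite)"
  obtains v :: "'a^'m" where "w = to_jnf_vec v"
proof
  let ?v = "\<chi> b. vec_index w (inv_into {0..<CARD('m)} enum_index b) :: 'a^'m"
  show "w = to_jnf_vec ?v"
    using assms bij_betw_enum_index[where 'm='m]
    by (intro eq_vecI) (auto simp: to_jnf_vec_def bij_betw_inv_into_left)
qed

lemma to_jnf_vec_0 [simp]: "to_jnf_vec (0 :: 'a::zero^'m::finite) = 0\<^sub>v CARD('m)"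
  by (simp add: to_jnf_vec_def zero_vec_def)

lemma to_jnf_vec_smult: "to_jnf_vec (c *s v) = c \<cdot>\<^sub>v to_jnf_vec v"
  by (intro eq_vecI) (simp_all add: to_jnf_vec_def)

lemma to_jnf_mult_vec: "to_jnf M *\<^sub>v to_jnf_vec v = to_jnf_vec (M *v (v :: 'a::comm_ring_1^'m::finite))"
  by (intro eq_vecI)
    (simp_all add: to_jnf_def to_jnf_vec_def scalar_prod_def matrix_vector_mult_def
      atLeast0LessThan sum_enum_index[where f = "\<lambda>b. _ $ b * v $ b"])

lemma eigenvalue_to_jnf_iff: "eigenvalue (to_jnf M) \<mu> \<longleftrightarrow> is_eigenvalue (M :: complex^'m::finite^'m) \<mu>"
proof
  assume "eigenvalue (to_jnf M) \<mu>"
  then obtain w where w: "w \<in> carrier_vec CARD('m)" "w \<noteq> 0\<^sub>v CARD('m)" "to_jnf M *\<^sub>v w = \<mu> \<cdot>\<^sub>v w"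
    by (auto simp: eigenvalue_def eigenvector_def)
  from w(1) obtain v :: "complex^'m" where "w = to_jnf_vec v" by (rule to_jnf_vec_surj)
  with w(2,3) show "is_eigenvalue M \<mu>"
    by (auto simp: is_eigenvalue_def to_jnf_mult_vec to_jnf_vec_smult[symmetric] to_jnf_vec_eq_iff
        simp flip: to_jnf_vec_0)
next
  assume "is_eigenvalue M \<mu>"
  then obtain v where "v \<noteq> 0" "M *v v = \<mu> *s v" by (auto simp: is_eigenvalue_def)
  then show "eigenvalue (to_jnf M) \<mu>"
    unfolding eigenvalue_def eigenvector_def
    by (intro exI[of _ "to_jnf_vec v"])
      (auto simp: to_jnf_mult_vec to_jnf_vec_smult[symmetric] to_jnf_vec_eq_iff simp flip: to_jnf_vec_0)
qed

lemma to_jnf_mult: "to_jnf (A ** B) = to_jnf A * to_jnf (B :: 'a::comm_ring_1^'m::finite^'m)"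
  by (intro eq_matI)
    (simp_all add: to_jnf_def scalar_prod_def matrix_matrix_mult_def atLeast0LessThan
      sum_enum_index[where f = "\<lambda>b. _ $ b * B $ b $ _"])

lemma to_jnf_one: "to_jnf (mat 1 :: 'a::comm_ring_1^'m::finite^'m) = 1\<^sub>m CARD('m)"
  by (intro eq_matI) (auto simp: to_jnf_def Finite_Cartesian_Product.mat_def enum_index_eq_iff)

lemma to_jnf_mat_pow: "to_jnf (mat_pow M N) = to_jnf M ^\<^sub>m N"
  by (induction N) (simp_all add: to_jnf_one mat_pow_Suc_right to_jnf_mult del: mat_pow.simps(2))

lemma spectrum_to_jnf: "spectrum (to_jnf M) = {\<mu>. is_eigenvalue M \<mu>}"
  by (simp add: spectrum_def eigenvalue_to_jnf_iff[symmetric])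

lemma spec_radius_eq_spectral_radius: "spec_radius M = spectral_radius (to_jnf M)"
  by (simp add: spec_radius_def spectral_radius_def spectrum_to_jnf setcompr_eq_image)

lemma spec_radius_attained:
  obtains \<mu> where "is_eigenvalue M \<mu>" "cmod \<mu> = spec_radius M"
  using spectral_radius_mem_max(1)[OF to_jnf_carrier[of M]]
  by (auto simp: spec_radius_eq_spectral_radius spectrum_to_jnf intro: that)

lemma norm_le_spec_radius: "is_eigenvalue M \<mu> \<Longrightarrow> cmod \<mu> \<le> spec_radius M"
  using spectral_radius_mem_max(2)[OF to_jnf_carrier[of M]]
  by (simp add: spec_radius_eq_spectral_radius spectrum_to_jnf)

lemma spec_radius_lessI: "(\<And>\<mu>. is_eigenvalue M \<mu> \<Longrightarrow> cmod \<mu> < r) \<Longrightarrow> spec_radius M < r"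
  by (metis spec_radius_attained)

lemma spec_radius_nonneg: "0 \<le> spec_radius M"
  by (metis spec_radius_attained norm_ge_zero)

lemma spec_radius_scaleR_less_1:
  assumes "spec_radius M < r"
  shows "spec_radius ((1 / r) *\<^sub>R M) < 1"
proof (rule spec_radius_lessI)
  have r: "0 < r" using assms spec_radius_nonneg[of M] by linarith
  fix \<mu> assume "is_eigenvalue ((1 / r) *\<^sub>R M) \<mu>"
  then obtain v where "v \<noteq> 0" "((1 / r) *\<^sub>R M) *v v = \<mu> *s v" by (auto simp: is_eigenvalue_def)
  moreover have "((1 / r) *\<^sub>R M) *v v = (1 / r) *\<^sub>R (M *v v)"
    by (simp add: Finite_Cartesian_Product.vec_eq_iff matrix_vector_mult_def scaleR_sum_right)
  then have "M *v v = r *\<^sub>R (((1 / r) *\<^sub>R M) *v v)" using r by simp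
  ultimately have "is_eigenvalue M (complex_of_real r * \<mu>)"
    by (auto simp: is_eigenvalue_def scaleR_eq_smult_vec vector_smult_assoc)
  then have "cmod (complex_of_real r * \<mu>) < r" using assms by (meson norm_le_spec_radius le_less_trans)
  then show "cmod \<mu> < 1" using r by (simp add: norm_mult)
qed

lemma mat_pow_entries_bounded:
  fixes M :: "complex^'m::finite^'m"
  assumes "spec_radius M < 1"
  obtains c where "\<And>N a b. cmod (mat_pow M N $ a $ b) \<le> c"
proof -
  obtain c where c: "\<And>N. norm_bound (to_jnf M ^\<^sub>m N) c"
    using spectral_radius_jnf_norm_bound_less_1_upper_triangular[OF to_jnf_carrier] assms
    by (auto simp: spec_radius_eq_spectral_radius)
  have "cmod (mat_pow M N $ a $ b) \<le> c" for N a b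
  proof -
    obtain i where "i < CARD('m)" "enum_index i = a" by (rule enum_index_surj)
    moreover obtain j where "j < CARD('m)" "enum_index j = b" by (rule enum_index_surj)
    ultimately show ?thesis
      using c[of N] unfolding norm_bound_def to_jnf_mat_pow[symmetric] by (auto simp: to_jnf_def)
  qed
  then show ?thesis by (rule that)
qed

lemma op_norm_mat_pow_bound:
  fixes M :: "complex^'m::finite^'m"
  assumes "spec_radius M < r"
  obtains C where "\<And>N. op_norm (mat_pow M N) \<le> C * r ^ N"
proof -
  have r: "0 < r" using assms spec_radius_nonneg[of M] by linarith
  define M' where "M' = (1 / r) *\<^sub>R M"
  obtain c where "\<And>N a b. cmod (mat_pow M' N $ a $ b) \<le> c"
    using mat_pow_entries_bounded[OF spec_radius_scaleR_less_1[OF assms]] by (auto simp: M'_def)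
  moreover have "mat_pow M N = r ^ N *\<^sub>R mat_pow M' N" for N
    using r by (simp add: M'_def mat_pow_scaleR power_one_over)
  ultimately have "cmod (mat_pow M N $ a $ b) \<le> r ^ N * c" for N a b
    using r by (simp add: mult_left_mono)
  then have "op_norm (mat_pow M N) \<le> real CARD('m) * real CARD('m) * (r ^ N * c)" for N
    by (rule op_norm_le_entry_bound)
  then show ?thesis by (intro that[of "real CARD('m) * real CARD('m) * c"]) (simp add: mult_ac)
qed

section \<open>Unitary representations\<close>

lemma unitary_rep_one:
  assumes "group G" and rep: "unitary_rep G \<rho>"
  shows "\<rho> \<one>\<^bsub>G\<^esub> = mat 1"
proof -
  interpret group G by fact
  let ?P = "\<rho> \<one>\<^bsub>G\<^esub>"
  have idem: "?P ** ?P = ?P" using rep unfolding unitary_rep_def by (metis one_closed l_one)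
  have inv: "?P ** conj_transpose ?P = mat 1" using rep by (simp add: unitary_rep_def unitary_mat_def)
  have "?P = ?P ** (?P ** conj_transpose ?P)" by (simp add: inv)
  also have "\<dots> = (?P ** ?P) ** conj_transpose ?P" by (simp add: matrix_mul_assoc)
  also have "\<dots> = mat 1" by (simp add: idem inv)
  finally show ?thesis .
qed

lemma unitary_rep_generate_eigenvector:
  assumes "group G" and rep: "unitary_rep G \<rho>" and S: "S \<subseteq> carrier G"
    and eig: "\<And>s. s \<in> S \<Longrightarrow> \<exists>c. \<rho> s *v z = c *s z"
    and "g \<in> generate G S"
  shows "\<exists>c. \<rho> g *v z = c *s z"
  using \<open>g \<in> generate G S\<close>
proof (induction rule: generate.induct)
  case one
  show ?case using unitary_rep_one[OF assms(1) rep] by (intro exI[of _ 1]) simp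
next
  case (incl h)
  then show ?case by (rule eig)
next
  case (inv h)
  interpret group G by fact
  obtain c where c: "\<rho> h *v z = c *s z" using eig[OF inv] by blast
  have "h \<in> carrier G" using inv S by blast
  then have "\<rho> (inv\<^bsub>G\<^esub> h \<otimes>\<^bsub>G\<^esub> h) = \<rho> (inv\<^bsub>G\<^esub> h) ** \<rho> h"
    using rep \<open>h \<in> carrier G\<close> unfolding unitary_rep_def by (metis inv_closed)
  then have "\<rho> (inv\<^bsub>G\<^esub> h) ** \<rho> h = mat 1"
    using unitary_rep_one[OF assms(1) rep] \<open>h \<in> carrier G\<close> by simp
  then have "z = (\<rho> (inv\<^bsub>G\<^esub> h) ** \<rho> h) *v z" by simp
  also have "\<dots> = c *s (\<rho> (inv\<^bsub>G\<^esub> h) *v z)"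
    using c by (simp add: matrix_vector_mul_assoc[symmetric] vector_scalar_commute)
  finally have z: "z = c *s (\<rho> (inv\<^bsub>G\<^esub> h) *v z)" .
  show ?case
  proof (cases "c = 0")
    case True
    then show ?thesis using z by (intro exI[of _ 0]) simp
  next
    case False
    then have "\<rho> (inv\<^bsub>G\<^esub> h) *v z = (1 / c) *s z"
      by (subst z) (simp add: vector_smult_assoc)
    then show ?thesis by blast
  qed
next
  case (eng h1 h2)
  interpret group G by fact
  have "h1 \<in> carrier G" "h2 \<in> carrier G" using eng.hyps S generate_in_carrier by blast+
  then have "\<rho> (h1 \<otimes>\<^bsub>G\<^esub> h2) = \<rho> h1 ** \<rho> h2" using rep by (simp add: unitary_rep_def)
  moreover obtain c1 c2 where "\<rho> h1 *v z = c1 *s z" "\<rho> h2 *v z = c2 *s z" using eng.IH by blast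
  ultimately have "\<rho> (h1 \<otimes>\<^bsub>G\<^esub> h2) *v z = (c2 * c1) *s z"
    by (simp add: matrix_vector_mul_assoc[symmetric] vector_scalar_commute vector_smult_assoc)
  then show ?case by blast
qed

lemma card_1_if_all_multiples:
  fixes z :: "complex^'k"
  assumes multiple: "\<And>w. \<exists>c. w = c *s z"
  shows "CARD('k) = 1"
proof -
  have "a = b" for a b :: 'k
  proof (rule ccontr)
    assume "a \<noteq> b"
    obtain c c' where c: "axis a 1 = c *s z" and c': "axis b 1 = c' *s z" using multiple by blast
    have "c * z $ a = 1" using arg_cong[OF c, of "\<lambda>v. v $ a"] by (simp add: axis_def)
    moreover have "c * z $ b = 0" using arg_cong[OF c, of "\<lambda>v. v $ b"] \<open>a \<noteq> b\<close> by (simp add: axis_def)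
    moreover have "c' * z $ b = 1" using arg_cong[OF c', of "\<lambda>v. v $ b"] by (simp add: axis_def)
    ultimately show False by (metis mult_zero_right mult_eq_0_iff zero_neq_one)
  qed
  then have "(UNIV :: 'k set) = {undefined}" by blast
  then show ?thesis by (metis card_1_singleton_iff One_nat_def)
qed

lemma irreducible_rep_common_eigenvector_card_1:
  fixes \<rho> :: "'g \<Rightarrow> complex^'k^'k"
  assumes "group G" and irr: "irreducible_rep G \<rho>"
    and S: "S \<subseteq> carrier G" and gen: "generate G S = carrier G"
    and "z \<noteq> 0" and eig: "\<And>s. s \<in> S \<Longrightarrow> \<exists>c. \<rho> s *v z = c *s z"
  shows "CARD('k) = 1"
proof -
  define W where "W = range (\<lambda>c. c *s z)"
  have W_iff: "w \<in> W \<longleftrightarrow> (\<exists>c. w = c *s z)" for w by (auto simp: W_def)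
  have "csubspace_vec W"
    unfolding csubspace_vec_def
  proof (intro conjI ballI allI)
    show "0 \<in> W" using W_iff by (metis vector_smult_lzero)
  next
    fix x y assume "x \<in> W" "y \<in> W"
    then show "x + y \<in> W" using W_iff by (metis vector_sadd_rdistrib)
  next
    fix c x assume "x \<in> W"
    then show "c *s x \<in> W" using W_iff by (metis vector_smult_assoc)
  qed
  moreover have "\<rho> g *v w \<in> W" if g: "g \<in> carrier G" and w: "w \<in> W" for g w
  proof -
    obtain a where "w = a *s z" using w W_iff by blast
    moreover obtain c where "\<rho> g *v z = c *s z"
      using unitary_rep_generate_eigenvector[of G \<rho> S z g] assms(1) irr S eig gen g
      by (auto simp: irreducible_rep_def)
    ultimately have "\<rho> g *v w = (a * c) *s z"
      by (simp add: vector_scalar_commute vector_smult_assoc mult.commute)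
    then show ?thesis using W_iff by blast
  qed
  ultimately have "W = {0} \<or> W = UNIV" using irr by (auto simp: irreducible_rep_def)
  moreover have "z \<in> W" using W_iff by (metis vector_smult_lid)
  ultimately have "W = UNIV" using \<open>z \<noteq> 0\<close> by blast
  then show ?thesis using W_iff by (intro card_1_if_all_multiples[of z]) blast
qed

lemma card_1_matrix_eqI:
  fixes M N :: "complex^'k^'k"
  assumes "CARD('k) = 1" and "z \<noteq> 0" and eq: "M *v z = N *v z"
  shows "M = N"
proof -
  obtain a :: 'k where UNIV: "UNIV = {a}" using assms(1) card_1_singletonE[of "UNIV :: 'k set"] by auto
  then have all_a: "i = a" for i :: 'k by blast
  have "z $ a \<noteq> 0" using \<open>z \<noteq> 0\<close> all_a by (metis Finite_Cartesian_Product.vec_eq_iff zero_index)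
  moreover have "(\<Sum>j\<in>UNIV. f j) = f a" for f :: "'k \<Rightarrow> complex" by (subst UNIV) simp
  then have "M $ a $ a * z $ a = N $ a $ a * z $ a"
    using arg_cong[OF eq, of "\<lambda>v. v $ a"] by (simp add: matrix_vector_mult_def)
  ultimately have "M $ a $ a = N $ a $ a" by simp
  then show ?thesis by (metis Finite_Cartesian_Product.vec_eq_iff all_a)
qed

section \<open>Walks and adjacency matrices\<close>

text \<open>The Rayleigh-quotient arguments need a real copy of adjacency E.\<close>

definition real_adjacency :: "('n::finite \<Rightarrow> 'n \<Rightarrow> bool) \<Rightarrow> real^'n^'n" where
  "real_adjacency E = (\<chi> i j. of_bool (E i j))"

lemma real_adjacency_mult_vec: "(real_adjacency E *v y) $ i = (\<Sum>j | E i j. y $ j)"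
  by (simp add: real_adjacency_def matrix_vector_mult_def)

lemma adjacency_mult_vec: "(adjacency E *v y) $ i = (\<Sum>j | E i j. y $ j)"
  by (simp add: adjacency_def matrix_vector_mult_def flip: of_bool_def)

lemma finite_walks: "finite (walks (E :: 'n::finite \<Rightarrow> 'n \<Rightarrow> bool) N i j)"
proof -
  have "walks E N i j \<subseteq> {ws. set ws \<subseteq> UNIV \<and> length ws = Suc N}" by (auto simp: walks_def)
  then show ?thesis using finite_lists_length_eq[of "UNIV :: 'n set"] finite_subset by auto
qed

lemma walks_0: "walks E 0 i j = (if i = j then {[i]} else {})"
  by (auto simp: walks_def length_Suc_conv)

lemma walks_Suc: "walks E (Suc N) i j = (\<Union>k\<in>{k. E i k}. (#) i ` walks E N k j)"
proof (intro equalityI subsetI)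
  fix ws assume "ws \<in> walks E (Suc N) i j"
  then obtain ws' where ws: "ws = i # ws'" "ws' \<in> walks E N (ws' ! 0) j" "E i (ws' ! 0)"
    by (cases ws) (auto simp: walks_def All_less_Suc2)
  then show "ws \<in> (\<Union>k\<in>{k. E i k}. (#) i ` walks E N k j)" by blast
next
  fix ws assume "ws \<in> (\<Union>k\<in>{k. E i k}. (#) i ` walks E N k j)"
  then show "ws \<in> walks E (Suc N) i j" by (auto simp: walks_def All_less_Suc2)
qed

lemma card_walks_eq_adjacency_power:
  "real (card (walks E N i j)) = mat_pow (real_adjacency E) N $ i $ j"
proof (induction N arbitrary: i)
  case 0
  then show ?case by (simp add: walks_0 Finite_Cartesian_Product.mat_def)
next
  case (Suc N)
  have "card (walks E (Suc N) i j) = (\<Sum>k | E i k. card ((#) i ` walks E N k j))"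
    unfolding walks_Suc by (rule card_UN_disjoint) (auto simp: finite_walks, auto simp: walks_def)
  also have "\<dots> = (\<Sum>k | E i k. card (walks E N k j))"
    by (intro sum.cong refl card_image) simp
  finally show ?case
    using Suc.IH by (simp add: matrix_matrix_mult_def real_adjacency_def)
qed

lemma graph_connected_propagate:
  assumes "graph_connected E" and "P i" and step: "\<And>a b. E a b \<Longrightarrow> P a \<Longrightarrow> P b"
  shows "P j"
proof -
  from assms(1) obtain N where "walks E N i j \<noteq> {}" unfolding graph_connected_def by blast
  then obtain ws where ws: "ws \<in> walks E N i j" by blast
  have "m \<le> N \<Longrightarrow> P (ws ! m)" for m
    by (induction m) (use ws assms(2) step in \<open>auto simp: walks_def Suc_le_eq\<close>)
  then show ?thesis using ws by (auto simp: walks_def)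
qed

section \<open>Perron-Frobenius theory of the graph\<close>

locale perron_graph =
  fixes E :: "'n::finite \<Rightarrow> 'n \<Rightarrow> bool" and lambda1 :: real
  assumes graph: "simple_graph E" and conn: "graph_connected E"
    and pf_eig: "is_eigenvalue (adjacency E) (complex_of_real lambda1)" and pos: "lambda1 > 0"
    and pf_dom: "\<And>\<mu>. is_eigenvalue (adjacency E) \<mu> \<Longrightarrow> \<mu> \<noteq> complex_of_real lambda1 \<Longrightarrow> cmod \<mu> < lambda1"
begin

lemma edge_sym: "E a b \<longleftrightarrow> E b a"
  using graph by (auto simp: simple_graph_def)

lemma real_adjacency_transpose: "transpose (real_adjacency E) = real_adjacency E"
  by (auto simp: real_adjacency_def Finite_Cartesian_Product.transpose_def
      Finite_Cartesian_Product.vec_eq_iff edge_sym)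

lemma orthogonal_perron_invariant:
  assumes "real_adjacency E *v y = lambda1 *\<^sub>R y" and "y \<bullet> w = 0"
  shows "y \<bullet> (real_adjacency E *v w) = 0"
  using inner_symmetric_matrix[OF real_adjacency_transpose, of y w] assms by simp

lemma real_eigenvalue_cases:
  assumes eig: "real_adjacency E *v v = m *\<^sub>R v" and "v \<noteq> 0"
  shows "m = lambda1 \<or> \<bar>m\<bar> < lambda1"
proof -
  let ?v = "\<chi> i. complex_of_real (v $ i)"
  have "(adjacency E *v ?v) $ i = (complex_of_real m *s ?v) $ i" for i
  proof -
    have "(\<Sum>j | E i j. v $ j) = m * v $ i" using arg_cong[OF eig, of "\<lambda>u. u $ i"]
      by (simp add: real_adjacency_mult_vec)
    then show ?thesis by (simp add: adjacency_mult_vec flip: of_real_sum of_real_mult)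
  qed
  moreover have "?v \<noteq> 0" using \<open>v \<noteq> 0\<close> by (simp add: Finite_Cartesian_Product.vec_eq_iff)
  ultimately have "is_eigenvalue (adjacency E) (complex_of_real m)"
    unfolding is_eigenvalue_def by (intro exI[of _ ?v]) (simp add: Finite_Cartesian_Product.vec_eq_iff)
  then show ?thesis using pf_dom by force
qed

lemma rayleigh_le_lambda1: "w \<bullet> (real_adjacency E *v w) \<le> lambda1 * (w \<bullet> w)"
proof -
  have "(UNIV :: (real^'n) set) \<noteq> {0}"
    by (metis UNIV_I axis_eq_0_iff singletonD zero_neq_one)
  obtain v m where "v \<in> UNIV" "v \<noteq> 0" "real_adjacency E *v v = m *\<^sub>R v"
    and le: "\<And>w. w \<in> UNIV \<Longrightarrow> w \<bullet> (real_adjacency E *v w) \<le> m * (w \<bullet> w)"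
    using symmetric_matrix_rayleigh_max[OF real_adjacency_transpose subspace_UNIV UNIV_I \<open>UNIV \<noteq> {0}\<close>]
    by blast
  then have "m \<le> lambda1" using real_eigenvalue_cases by force
  then show ?thesis using le[of w] by (meson UNIV_I inner_ge_zero mult_right_mono order_trans)
qed

lemma collatz_wielandt:
  assumes nonneg: "\<And>i. 0 \<le> y $ i" and "y \<noteq> 0"
    and sub: "\<And>i. s * y $ i \<le> (real_adjacency E *v y) $ i"
  shows "s \<le> lambda1" and "s = lambda1 \<Longrightarrow> real_adjacency E *v y = lambda1 *\<^sub>R y"
proof -
  have "s * (y \<bullet> y) = (\<Sum>i\<in>UNIV. y $ i * (s * y $ i))"
    by (simp add: inner_vec_def sum_distrib_left mult_ac)
  also have "\<dots> \<le> (\<Sum>i\<in>UNIV. y $ i * (real_adjacency E *v y) $ i)"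
    by (intro sum_mono mult_left_mono sub nonneg)
  also have "\<dots> = y \<bullet> (real_adjacency E *v y)" by (simp add: inner_vec_def)
  finally have lower: "s * (y \<bullet> y) \<le> y \<bullet> (real_adjacency E *v y)" .
  moreover have "0 < y \<bullet> y" using \<open>y \<noteq> 0\<close> by simp
  ultimately show "s \<le> lambda1"
    using rayleigh_le_lambda1[of y] by (meson mult_le_cancel_right_pos order_trans)
  show "real_adjacency E *v y = lambda1 *\<^sub>R y" if "s = lambda1"
    using lower that rayleigh_le_lambda1[of y]
    by (intro rayleigh_maximizer_eigenvector[OF real_adjacency_transpose subspace_UNIV _ rayleigh_le_lambda1])
      auto
qed

lemma nonneg_eigenvector_positive:
  assumes nonneg: "\<And>i. 0 \<le> y $ i" and "y \<noteq> 0" and eig: "real_adjacency E *v y = c *\<^sub>R y"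
  shows "0 < y $ i"
proof -
  obtain i0 where "y $ i0 \<noteq> 0" using \<open>y \<noteq> 0\<close> by (auto simp: Finite_Cartesian_Product.vec_eq_iff)
  moreover have "y $ b \<noteq> 0" if "E a b" and "y $ a \<noteq> 0" for a b
  proof
    assume "y $ b = 0"
    then have "(\<Sum>j | E b j. y $ j) = 0"
      using arg_cong[OF eig, of "\<lambda>u. u $ b"] by (simp add: real_adjacency_mult_vec)
    then have "y $ a = 0" using nonneg \<open>E a b\<close> edge_sym by (simp add: sum_nonneg_eq_0_iff)
    with \<open>y $ a \<noteq> 0\<close> show False ..
  qed
  ultimately have "y $ i \<noteq> 0" by (rule graph_connected_propagate[OF conn])
  then show ?thesis using nonneg[of i] by simp
qed

lemma perron_vector:
  obtains y where "\<And>i. 0 < y $ i" and "real_adjacency E *v y = lambda1 *\<^sub>R y"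
proof -
  obtain p where "p \<noteq> 0" and p: "adjacency E *v p = complex_of_real lambda1 *s p"
    using pf_eig by (auto simp: is_eigenvalue_def)
  define q where "q = (\<chi> i. cmod (p $ i))"
  have nonneg: "\<And>i. 0 \<le> q $ i" by (simp add: q_def)
  have "q \<noteq> 0" using \<open>p \<noteq> 0\<close> by (simp add: q_def Finite_Cartesian_Product.vec_eq_iff)
  have "lambda1 * q $ i \<le> (real_adjacency E *v q) $ i" for i
  proof -
    have "lambda1 * q $ i = cmod ((adjacency E *v p) $ i)" using p pos by (simp add: q_def norm_mult)
    also have "\<dots> \<le> (\<Sum>j | E i j. cmod (p $ j))" unfolding adjacency_mult_vec by (rule norm_sum)
    also have "\<dots> = (real_adjacency E *v q) $ i" by (simp add: real_adjacency_mult_vec q_def)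
    finally show ?thesis .
  qed
  then have "real_adjacency E *v q = lambda1 *\<^sub>R q" by (rule collatz_wielandt(2)[OF nonneg \<open>q \<noteq> 0\<close>]) simp
  then show ?thesis using nonneg_eigenvector_positive[OF nonneg \<open>q \<noteq> 0\<close>] that by blast
qed

lemma lambda1_eigenvector_positive:
  assumes eig: "real_adjacency E *v u = lambda1 *\<^sub>R u" and "0 < u $ i"
  shows "0 < u $ j"
proof -
  define p where "p = (\<chi> k. max (u $ k) 0)"
  have nonneg: "\<And>k. 0 \<le> p $ k" by (simp add: p_def)
  have "p \<noteq> 0" using \<open>0 < u $ i\<close> by (auto simp: p_def Finite_Cartesian_Product.vec_eq_iff intro!: exI[of _ i])
  have "lambda1 * p $ k \<le> (real_adjacency E *v p) $ k" for k
  proof (cases "0 < u $ k")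
    case True
    then have "lambda1 * p $ k = (real_adjacency E *v u) $ k" using eig by (simp add: p_def)
    also have "\<dots> \<le> (real_adjacency E *v p) $ k"
      unfolding real_adjacency_mult_vec by (intro sum_mono) (simp add: p_def)
    finally show ?thesis .
  next
    case False
    then have "lambda1 * p $ k = 0" by (simp add: p_def)
    also have "\<dots> \<le> (real_adjacency E *v p) $ k"
      unfolding real_adjacency_mult_vec by (intro sum_nonneg nonneg)
    finally show ?thesis .
  qed
  then have "real_adjacency E *v p = lambda1 *\<^sub>R p" by (rule collatz_wielandt(2)[OF nonneg \<open>p \<noteq> 0\<close>]) simp
  then have "0 < p $ j" by (rule nonneg_eigenvector_positive[OF nonneg \<open>p \<noteq> 0\<close>])
  then show ?thesis by (simp add: p_def)
qed

lemma lambda1_eigenvector_orthogonal_eq_0: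
  assumes y: "\<And>i. 0 < y $ i" and eig: "real_adjacency E *v u = lambda1 *\<^sub>R u" and "y \<bullet> u = 0"
  shows "u = 0"
proof (rule ccontr)
  have inner_pos: "0 < y \<bullet> w" if "real_adjacency E *v w = lambda1 *\<^sub>R w" and "0 < w $ i" for w i
    using lambda1_eigenvector_positive[OF that] y by (simp add: inner_vec_def sum_pos)
  assume "u \<noteq> 0"
  then obtain i where "u $ i \<noteq> 0" by (auto simp: Finite_Cartesian_Product.vec_eq_iff)
  then consider "0 < u $ i" | "0 < (- u) $ i" by fastforce
  then show False
  proof cases
    case 1
    then show False using inner_pos[OF eig] \<open>y \<bullet> u = 0\<close> by fastforce
  next
    case 2
    have "real_adjacency E *v (- u) = lambda1 *\<^sub>R (- u)"
      using eig matrix_vector_mult_scaleR[of "real_adjacency E" "-1" u] by simp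
    then show False using inner_pos[OF _ 2] \<open>y \<bullet> u = 0\<close> by simp
  qed
qed

lemma square_eigenvalue_on_orthogonal_less:
  assumes y: "\<And>i. 0 < y $ i" "real_adjacency E *v y = lambda1 *\<^sub>R y"
    and "y \<bullet> v = 0" and "v \<noteq> 0" and "0 \<le> r"
    and sq: "real_adjacency E *v (real_adjacency E *v v) = r\<^sup>2 *\<^sub>R v"
  shows "r < lambda1"
proof -
  let ?A = "real_adjacency E"
  \<comment> \<open>u is either 0, making -r an eigenvalue, or an eigenvector for r orthogonal to y.\<close>
  define u where "u = ?A *v v + r *\<^sub>R v"
  have "?A *v u = r\<^sup>2 *\<^sub>R v + r *\<^sub>R (?A *v v)"
    by (simp add: u_def matrix_vector_right_distrib matrix_vector_mult_scaleR sq)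
  also have "\<dots> = r *\<^sub>R u" by (simp add: u_def scaleR_add_right power2_eq_square add.commute)
  finally have Au: "?A *v u = r *\<^sub>R u" .
  show ?thesis
  proof (cases "u = 0")
    case True
    then have "?A *v v = (- r) *\<^sub>R v" by (simp add: u_def add_eq_0_iff)
    with real_eigenvalue_cases[OF this \<open>v \<noteq> 0\<close>] show ?thesis using \<open>0 \<le> r\<close> pos by auto
  next
    case False
    have "y \<bullet> u = 0"
      using orthogonal_perron_invariant[OF y(2) \<open>y \<bullet> v = 0\<close>] \<open>y \<bullet> v = 0\<close>
      by (simp add: u_def inner_add_right)
    then have "r \<noteq> lambda1" using lambda1_eigenvector_orthogonal_eq_0[OF y(1)] Au False by auto
    with real_eigenvalue_cases[OF Au False] show ?thesis by auto
  qed
qed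

lemma spectral_gap:
  assumes y: "\<And>i. 0 < y $ i" "real_adjacency E *v y = lambda1 *\<^sub>R y"
  obtains r where "0 \<le> r" "r < lambda1"
    "\<And>w. y \<bullet> w = 0 \<Longrightarrow> norm (real_adjacency E *v w) \<le> r * norm w"
proof -
  let ?A = "real_adjacency E"
  let ?B = "?A ** ?A" and ?V = "{w. y \<bullet> w = 0}"
  note norm_sq = norm_mult_vec_sq_symmetric[OF real_adjacency_transpose]
  show ?thesis
  proof (cases "?V = {0}")
    case True
    have "norm (?A *v w) \<le> 0 * norm w" if "y \<bullet> w = 0" for w
    proof -
      have "w = 0" using True that by blast
      then show ?thesis by simp
    qed
    then show ?thesis using pos by (intro that[of 0]) auto
  next
    case False
    have B_sym: "transpose ?B = ?B" by (simp add: matrix_transpose_mul real_adjacency_transpose)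
    have B_inv: "?B *v w \<in> ?V" if "w \<in> ?V" for w
      using orthogonal_perron_invariant[OF y(2)] that by (simp add: matrix_vector_mul_assoc[symmetric])
    obtain v m where "v \<in> ?V" "v \<noteq> 0" "?B *v v = m *\<^sub>R v"
      and le: "\<And>w. w \<in> ?V \<Longrightarrow> w \<bullet> (?B *v w) \<le> m * (w \<bullet> w)"
      using symmetric_matrix_rayleigh_max[OF B_sym subspace_hyperplane B_inv False] by blast
    then have v: "y \<bullet> v = 0" "v \<noteq> 0" "?B *v v = m *\<^sub>R v" by simp_all
    have "0 \<le> (norm (?A *v v))\<^sup>2" by simp
    also have "\<dots> = m * (v \<bullet> v)" using norm_sq[of v] v(3) by simp
    finally have "0 \<le> m * (v \<bullet> v)" .
    moreover have "0 < v \<bullet> v" using v(2) by simp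
    ultimately have "0 \<le> m" by (auto simp: zero_le_mult_iff)
    define r where "r = sqrt m"
    have "0 \<le> r" by (simp add: r_def \<open>0 \<le> m\<close>)
    have "norm (?A *v w) \<le> r * norm w" if "y \<bullet> w = 0" for w
    proof (rule power2_le_imp_le)
      show "(norm (?A *v w))\<^sup>2 \<le> (r * norm w)\<^sup>2"
        using le[of w] that norm_sq[of w] \<open>0 \<le> m\<close> by (simp add: r_def power_mult_distrib dot_square_norm)
    qed (simp add: \<open>0 \<le> r\<close>)
    moreover have "r < lambda1"
      using v \<open>0 \<le> r\<close> \<open>0 \<le> m\<close>
      by (intro square_eigenvalue_on_orthogonal_less[OF y]) (simp_all add: r_def matrix_vector_mul_assoc)
    ultimately show ?thesis using \<open>0 \<le> r\<close> that by blast
  qed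
qed

lemma mat_pow_orthogonal_bound:
  assumes y: "real_adjacency E *v y = lambda1 *\<^sub>R y" and "0 \<le> r"
    and gap: "\<And>w. y \<bullet> w = 0 \<Longrightarrow> norm (real_adjacency E *v w) \<le> r * norm w"
    and "y \<bullet> w = 0"
  shows "norm (mat_pow (real_adjacency E) N *v w) \<le> r ^ N * norm w"
proof -
  let ?A = "real_adjacency E"
  have "y \<bullet> (mat_pow ?A N *v w) = 0 \<and> norm (mat_pow ?A N *v w) \<le> r ^ N * norm w"
  proof (induction N)
    case 0
    then show ?case using \<open>y \<bullet> w = 0\<close> by simp
  next
    case (Suc N)
    let ?x = "mat_pow ?A N *v w"
    have "norm (?A *v ?x) \<le> r * (r ^ N * norm w)"
      using gap[of ?x] Suc \<open>0 \<le> r\<close> by (meson mult_left_mono order_trans)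
    then show ?case
      using orthogonal_perron_invariant[OF y] Suc by (simp add: mat_pow_mult_vec_Suc del: mat_pow.simps(2))
  qed
  then show ?thesis ..
qed

lemma card_walks_asymptotic:
  obtains c where "0 < c" "(\<lambda>N. real (card (walks E N i j)) / lambda1 ^ N) \<longlonglongrightarrow> c"
proof -
  let ?A = "real_adjacency E"
  obtain y where y: "\<And>i. 0 < y $ i" "?A *v y = lambda1 *\<^sub>R y" using perron_vector by blast
  obtain r where r: "0 \<le> r" "r < lambda1"
    and gap: "\<And>w. y \<bullet> w = 0 \<Longrightarrow> norm (?A *v w) \<le> r * norm w"
    using spectral_gap[OF y] by blast
  have "0 < y \<bullet> y" using y(1) by (metis inner_gt_zero_iff less_irrefl zero_index)
  define \<alpha> where "\<alpha> = y $ j / (y \<bullet> y)"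
  define w where "w = axis j 1 - \<alpha> *\<^sub>R y"
  have "y \<bullet> w = 0" using \<open>0 < y \<bullet> y\<close> by (simp add: w_def \<alpha>_def inner_diff_right inner_axis)
  note pow_y = mat_pow_eigenvector[OF y(2)]
  note pow_w = mat_pow_orthogonal_bound[OF y(2) r(1) gap \<open>y \<bullet> w = 0\<close>]
  have walks: "real (card (walks E N i j)) / lambda1 ^ N = \<alpha> * y $ i + (mat_pow ?A N *v w) $ i / lambda1 ^ N"
    for N
  proof -
    have "real (card (walks E N i j)) = (mat_pow ?A N *v axis j 1) $ i"
      by (simp add: card_walks_eq_adjacency_power matrix_vector_mult_basis column_def)
    also have "axis j 1 = \<alpha> *\<^sub>R y + w" by (simp add: w_def)
    finally have "real (card (walks E N i j)) = \<alpha> * (lambda1 ^ N * y $ i) + (mat_pow ?A N *v w) $ i"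
      by (simp add: matrix_vector_right_distrib matrix_vector_mult_scaleR pow_y)
    moreover have "lambda1 ^ N \<noteq> 0" using pos by simp
    ultimately show ?thesis using pos by (simp add: add_divide_distrib)
  qed
  have "(\<lambda>N. (mat_pow ?A N *v w) $ i / lambda1 ^ N) \<longlonglongrightarrow> 0"
  proof (rule Lim_null_comparison)
    have "norm ((mat_pow ?A N *v w) $ i / lambda1 ^ N) \<le> (r / lambda1) ^ N * norm w" for N
    proof -
      have "\<bar>(mat_pow ?A N *v w) $ i\<bar> \<le> r ^ N * norm w"
        using component_le_norm_cart[of "mat_pow ?A N *v w" i] pow_w[of N] by linarith
      then have "\<bar>(mat_pow ?A N *v w) $ i\<bar> / lambda1 ^ N \<le> r ^ N * norm w / lambda1 ^ N"
        using pos by (simp add: divide_right_mono)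
      then show ?thesis using pos by (simp add: abs_divide power_divide)
    qed
    then show "\<forall>\<^sub>F N in sequentially. norm ((mat_pow ?A N *v w) $ i / lambda1 ^ N) \<le> (r / lambda1) ^ N * norm w"
      by simp
    show "(\<lambda>N. (r / lambda1) ^ N * norm w) \<longlonglongrightarrow> 0"
      using r pos by (intro tendsto_mult_left_zero LIMSEQ_power_zero) simp
  qed
  then have "(\<lambda>N. \<alpha> * y $ i + (mat_pow ?A N *v w) $ i / lambda1 ^ N) \<longlonglongrightarrow> \<alpha> * y $ i + 0"
    by (intro tendsto_add tendsto_const)
  then have "(\<lambda>N. real (card (walks E N i j)) / lambda1 ^ N) \<longlonglongrightarrow> \<alpha> * y $ i"
    by (simp add: walks)
  moreover have "0 < \<alpha> * y $ i" using y(1) \<open>0 < y \<bullet> y\<close> by (simp add: \<alpha>_def)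
  ultimately show ?thesis using that by blast
qed

lemma op_norm_pow_div_card_walks_tendsto_0:
  assumes "spec_radius M < lambda1"
  shows "(\<lambda>N. op_norm (mat_pow M N) / real (card (walks E N i j))) \<longlonglongrightarrow> 0"
proof -
  define r where "r = (spec_radius M + lambda1) / 2"
  have "spec_radius M < r" "r < lambda1" using assms by (simp_all add: r_def)
  have "0 \<le> r" using spec_radius_nonneg[of M] \<open>spec_radius M < r\<close> by linarith
  obtain C where C: "\<And>N. op_norm (mat_pow M N) \<le> C * r ^ N"
    using op_norm_mat_pow_bound[OF \<open>spec_radius M < r\<close>] by blast
  have "(\<lambda>N. op_norm (mat_pow M N) / lambda1 ^ N) \<longlonglongrightarrow> 0"
  proof (rule Lim_null_comparison)
    have "norm (op_norm (mat_pow M N) / lambda1 ^ N) \<le> C * (r / lambda1) ^ N" for N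
    proof -
      have "norm (op_norm (mat_pow M N) / lambda1 ^ N) = op_norm (mat_pow M N) / lambda1 ^ N"
        using pos op_norm_nonneg[of "mat_pow M N"] by simp
      also have "\<dots> \<le> C * r ^ N / lambda1 ^ N" using C[of N] pos by (simp add: divide_right_mono)
      finally show ?thesis by (simp add: power_divide)
    qed
    then show "\<forall>\<^sub>F N in sequentially. norm (op_norm (mat_pow M N) / lambda1 ^ N) \<le> C * (r / lambda1) ^ N"
      by simp
    show "(\<lambda>N. C * (r / lambda1) ^ N) \<longlonglongrightarrow> 0"
      using \<open>0 \<le> r\<close> \<open>r < lambda1\<close> by (intro tendsto_mult_right_zero LIMSEQ_power_zero) simp
  qed
  moreover obtain c where "0 < c" and "(\<lambda>N. real (card (walks E N i j)) / lambda1 ^ N) \<longlonglongrightarrow> c"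
    by (rule card_walks_asymptotic)
  ultimately have "(\<lambda>N. (op_norm (mat_pow M N) / lambda1 ^ N) / (real (card (walks E N i j)) / lambda1 ^ N))
      \<longlonglongrightarrow> 0 / c"
    by (intro tendsto_divide) simp_all
  moreover have "(a / x) / (b / x) = a / b" if "x \<noteq> 0" for a b x :: real
    using that by (cases "b = 0") (simp_all add: field_simps)
  then have "(\<lambda>N. (op_norm (mat_pow M N) / lambda1 ^ N) / (real (card (walks E N i j)) / lambda1 ^ N))
      = (\<lambda>N. op_norm (mat_pow M N) / real (card (walks E N i j)))"
    using pos by (intro ext) simp
  ultimately show ?thesis by simp
qed

end

section \<open>The twisted adjacency matrix\<close>

definition vertex_block :: "complex^('n::finite \<times> 'k::finite) \<Rightarrow> 'n \<Rightarrow> complex^'k" where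
  "vertex_block x i = (\<chi> c. x $ (i, c))"

lemma vertex_blocks_eq_0_iff: "(\<forall>i. vertex_block x i = 0) \<longleftrightarrow> x = 0"
  by (auto simp: vertex_block_def Finite_Cartesian_Product.vec_eq_iff)

lemma vertex_block_smult: "vertex_block (c *s x) i = c *s vertex_block x i"
  by (simp add: vertex_block_def Finite_Cartesian_Product.vec_eq_iff)

lemma vertex_block_twisted_adj_mult_vec:
  "vertex_block (twisted_adj E R *v x) i = R i *v (\<Sum>j | E i j. vertex_block x j)"
proof (subst Finite_Cartesian_Product.vec_eq_iff, intro allI)
  fix c
  have "vertex_block (twisted_adj E R *v x) i $ c
      = (\<Sum>j\<in>UNIV. \<Sum>d\<in>UNIV. R i $ c $ d * adjacency E $ i $ j * x $ (j, d))"
    by (simp add: vertex_block_def twisted_adj_def matrix_vector_mult_def sum.cartesian_product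
        case_prod_unfold flip: UNIV_Times_UNIV)
  also have "\<dots> = (\<Sum>j | E i j. \<Sum>d\<in>UNIV. R i $ c $ d * x $ (j, d))"
    by (rule sum.mono_neutral_cong_right) (auto simp: adjacency_def)
  also have "\<dots> = (R i *v (\<Sum>j | E i j. vertex_block x j)) $ c"
    by (subst sum.swap) (simp add: vertex_block_def matrix_vector_mult_def sum_component sum_distrib_left)
  finally show "vertex_block (twisted_adj E R *v x) i $ c = (R i *v (\<Sum>j | E i j. vertex_block x j)) $ c" .
qed

lemma twisted_adj_eigenvector_blocks:
  assumes "is_eigenvalue (twisted_adj E R) \<mu>"
  obtains X where "\<exists>i. X i \<noteq> 0" and "\<And>i. R i *v (\<Sum>j | E i j. X j) = \<mu> *s X i"
proof -
  obtain x where "x \<noteq> 0" and x: "twisted_adj E R *v x = \<mu> *s x"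
    using assms by (auto simp: is_eigenvalue_def)
  have "R i *v (\<Sum>j | E i j. vertex_block x j) = \<mu> *s vertex_block x i" for i
    using arg_cong[OF x, of "\<lambda>v. vertex_block v i"]
    by (simp add: vertex_block_twisted_adj_mult_vec vertex_block_smult)
  moreover have "\<exists>i. vertex_block x i \<noteq> 0" using \<open>x \<noteq> 0\<close> vertex_blocks_eq_0_iff by blast
  ultimately show ?thesis using that by blast
qed

context perron_graph
begin

lemma adjacency_square_eigen:
  assumes "adjacency E *v (adjacency E *v w) = (complex_of_real lambda1)\<^sup>2 *s w"
  shows "adjacency E *v w = complex_of_real lambda1 *s w"
proof (rule ccontr)
  let ?l = "complex_of_real lambda1"
  define v where "v = adjacency E *v w - ?l *s w"
  assume "adjacency E *v w \<noteq> ?l *s w"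
  then have "v \<noteq> 0" by (simp add: v_def)
  have "adjacency E *v v = ?l\<^sup>2 *s w - ?l *s (adjacency E *v w)"
    by (simp add: v_def matrix_vector_mult_diff_distrib vector_scalar_commute assms)
  also have "\<dots> = (- ?l) *s v"
    by (simp add: v_def Finite_Cartesian_Product.vec_eq_iff power2_eq_square algebra_simps)
  finally have "is_eigenvalue (adjacency E) (- ?l)"
    using \<open>v \<noteq> 0\<close> by (auto simp: is_eigenvalue_def)
  then show False using pf_dom[of "- ?l"] pos by simp
qed

context
  fixes X :: "'n \<Rightarrow> complex^'k::finite" and y :: "real^'n"
  assumes y_pos: "\<And>i. 0 < y $ i" and y_perron: "real_adjacency E *v y = lambda1 *\<^sub>R y"
    and norm_X: "\<And>i. norm (X i) = y $ i"
    and norm_neighbour_sum: "\<And>i. norm (\<Sum>j | E i j. X j) = lambda1 * y $ i"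
begin

lemma neighbour_sum_parallel:
  assumes "E a b"
  shows "complex_of_real (lambda1 * y $ a) *s X b = complex_of_real (y $ b) *s (\<Sum>j | E a j. X j)"
proof -
  have "norm (\<Sum>j | E a j. X j) = (\<Sum>j | E a j. norm (X j))"
    using arg_cong[OF y_perron, of "\<lambda>u. u $ a"] by (simp add: norm_neighbour_sum norm_X real_adjacency_mult_vec)
  then have "norm (\<Sum>j | E a j. X j) *\<^sub>R X b = norm (X b) *\<^sub>R (\<Sum>j | E a j. X j)"
    using assms by (intro norm_sum_eq_sum_norm_imp_parallel) auto
  then show ?thesis by (simp add: norm_neighbour_sum norm_X scaleR_eq_smult_vec)
qed

lemma neighbour_sum_eq: "(\<Sum>j | E i j. X j) = complex_of_real lambda1 *s X i"
proof -
  let ?l = "complex_of_real lambda1"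
  have "(\<Sum>j | E i j. X j) $ c = ?l * X i $ c" for c
  proof -
    \<comment> \<open>The c-th coordinates w of the blocks satisfy A (A w) = lambda1^2 w, and -lambda1 is not
      an eigenvalue.\<close>
    let ?w = "\<chi> i. X i $ c"
    have Aw: "adjacency E *v ?w = (\<chi> i. (\<Sum>j | E i j. X j) $ c)"
      by (simp add: Finite_Cartesian_Product.vec_eq_iff adjacency_mult_vec sum_component)
    have "(adjacency E *v (adjacency E *v ?w)) $ a = ?l\<^sup>2 * ?w $ a" for a
    proof -
      have "(\<Sum>k | E j k. X k) $ c = complex_of_real (lambda1 / y $ a) * X a $ c * complex_of_real (y $ j)"
        if "E a j" for j
        using arg_cong[OF neighbour_sum_parallel[of j a], of "\<lambda>v. v $ c"] that edge_sym y_pos[of a]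
        by (simp add: field_simps)
      then have "(adjacency E *v (adjacency E *v ?w)) $ a
          = complex_of_real (lambda1 / y $ a) * X a $ c * complex_of_real (\<Sum>j | E a j. y $ j)"
        by (simp add: Aw adjacency_mult_vec sum_distrib_left)
      also have "(\<Sum>j | E a j. y $ j) = lambda1 * y $ a"
        using arg_cong[OF y_perron, of "\<lambda>u. u $ a"] by (simp add: real_adjacency_mult_vec)
      finally show ?thesis using y_pos[of a] by (simp add: field_simps power2_eq_square)
    qed
    then have "adjacency E *v ?w = ?l *s ?w"
      by (intro adjacency_square_eigen) (simp add: Finite_Cartesian_Product.vec_eq_iff)
    then show ?thesis using arg_cong[OF Aw[symmetric], of "\<lambda>v. v $ i"] by simp
  qed
  then show ?thesis by (simp add: Finite_Cartesian_Product.vec_eq_iff)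
qed

lemma blocks_proportional:
  obtains z where "z \<noteq> 0" and "\<And>i. X i = complex_of_real (y $ i) *s z"
proof -
  let ?Z = "\<lambda>i. complex_of_real (1 / y $ i) *s X i"
  have edge: "?Z a = ?Z b" if "E a b" for a b
  proof -
    have "complex_of_real (lambda1 * y $ a) *s X b = complex_of_real (lambda1 * y $ b) *s X a"
      using neighbour_sum_parallel[OF that] by (simp add: neighbour_sum_eq vector_smult_assoc mult.commute)
    then show ?thesis
      using pos y_pos[of a] y_pos[of b]
      by (simp add: Finite_Cartesian_Product.vec_eq_iff field_simps)
  qed
  define z where "z = ?Z undefined"
  have "?Z i = z" for i
  proof (rule graph_connected_propagate[OF conn, where P = "\<lambda>i. ?Z i = z"])
    show "?Z undefined = z" by (simp add: z_def)
    show "?Z b = z" if "E a b" and "?Z a = z" for a b using edge[OF that(1)] that(2) by simp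
  qed
  moreover have "X i = complex_of_real (y $ i) *s ?Z i" for i
    using y_pos[of i] by (simp add: vector_smult_assoc)
  ultimately have X: "X i = complex_of_real (y $ i) *s z" for i by simp
  have "z \<noteq> 0"
  proof
    assume "z = 0"
    then have "y $ undefined = 0" using norm_X[of undefined] X[of undefined] by simp
    with y_pos[of undefined] show False by simp
  qed
  show ?thesis by (rule that[OF \<open>z \<noteq> 0\<close> X])
qed

end

lemma block_eigenvalue_le:
  fixes R :: "'n \<Rightarrow> complex^'k::finite^'k"
  assumes U: "\<And>i. unitary_mat (R i)" and eig: "\<And>i. R i *v (\<Sum>j | E i j. X j) = \<mu> *s X i"
    and "\<exists>i. X i \<noteq> 0"
  shows "cmod \<mu> \<le> lambda1"
    and "cmod \<mu> = lambda1 \<Longrightarrow> real_adjacency E *v (\<chi> i. norm (X i)) = lambda1 *\<^sub>R (\<chi> i. norm (X i))"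
proof -
  let ?y = "\<chi> i. norm (X i)"
  have nonneg: "\<And>i. 0 \<le> ?y $ i" by simp
  have "?y \<noteq> 0" using \<open>\<exists>i. X i \<noteq> 0\<close> by (auto simp: Finite_Cartesian_Product.vec_eq_iff)
  have sub: "cmod \<mu> * ?y $ i \<le> (real_adjacency E *v ?y) $ i" for i
  proof -
    have "cmod \<mu> * ?y $ i = norm (R i *v (\<Sum>j | E i j. X j))" by (simp add: eig norm_smult_vec)
    also have "\<dots> = norm (\<Sum>j | E i j. X j)" by (rule unitary_mat_norm_mult_vec[OF U])
    also have "\<dots> \<le> (\<Sum>j | E i j. norm (X j))" by (rule norm_sum)
    also have "\<dots> = (real_adjacency E *v ?y) $ i" by (simp add: real_adjacency_mult_vec)
    finally show ?thesis .
  qed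
  show "cmod \<mu> \<le> lambda1" by (rule collatz_wielandt(1)[OF nonneg \<open>?y \<noteq> 0\<close> sub])
  show "real_adjacency E *v ?y = lambda1 *\<^sub>R ?y" if "cmod \<mu> = lambda1"
    by (rule collatz_wielandt(2)[OF nonneg \<open>?y \<noteq> 0\<close> sub that])
qed

lemma block_eigenvalue_eq_lambda1:
  fixes R :: "'n \<Rightarrow> complex^'k::finite^'k"
  assumes U: "\<And>i. unitary_mat (R i)" and eig: "\<And>i. R i *v (\<Sum>j | E i j. X j) = \<mu> *s X i"
    and nonzero: "\<exists>i. X i \<noteq> 0" and top: "cmod \<mu> = lambda1"
  obtains z where "z \<noteq> 0" and "\<And>i. R i *v z = (\<mu> / complex_of_real lambda1) *s z"
proof -
  define y where "y = (\<chi> i. norm (X i))"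
  have perron: "real_adjacency E *v y = lambda1 *\<^sub>R y"
    unfolding y_def by (rule block_eigenvalue_le(2)[OF U eig nonzero top])
  have "y \<noteq> 0" using nonzero by (auto simp: y_def Finite_Cartesian_Product.vec_eq_iff)
  then have y_pos: "\<And>i. 0 < y $ i" using nonneg_eigenvector_positive[OF _ _ perron] by (simp add: y_def)
  have norm_X: "\<And>i. norm (X i) = y $ i" by (simp add: y_def)
  have norm_neighbour_sum: "norm (\<Sum>j | E i j. X j) = lambda1 * y $ i" for i
    using unitary_mat_norm_mult_vec[OF U, of i "\<Sum>j | E i j. X j"] top
    by (simp add: eig y_def norm_smult_vec)
  note blocks = y_pos perron norm_X norm_neighbour_sum
  obtain z where "z \<noteq> 0" and X: "\<And>i. X i = complex_of_real (y $ i) *s z"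
    using blocks_proportional[OF blocks] by blast
  have "R i *v z = (\<mu> / complex_of_real lambda1) *s z" for i
  proof -
    have "complex_of_real (lambda1 * y $ i) *s (R i *v z) = complex_of_real (y $ i) *s (\<mu> *s z)"
      using eig[of i] neighbour_sum_eq[OF blocks, of i]
      by (simp add: X vector_scalar_commute vector_smult_assoc mult_ac)
    then show ?thesis
      using pos y_pos[of i] by (simp add: Finite_Cartesian_Product.vec_eq_iff field_simps)
  qed
  with \<open>z \<noteq> 0\<close> show ?thesis by (rule that)
qed

lemma twisted_adj_eigenvalue:
  fixes R :: "'n \<Rightarrow> complex^'k::finite^'k"
  assumes U: "\<And>i. unitary_mat (R i)" and "is_eigenvalue (twisted_adj E R) \<mu>"
  shows "cmod \<mu> \<le> lambda1"
    and "cmod \<mu> = lambda1 \<Longrightarrow> \<exists>z. z \<noteq> 0 \<and> (\<forall>i. R i *v z = (\<mu> / complex_of_real lambda1) *s z)"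
proof -
  obtain X where "\<exists>i. X i \<noteq> 0" and eig: "\<And>i. R i *v (\<Sum>j | E i j. X j) = \<mu> *s X i"
    using twisted_adj_eigenvector_blocks[OF assms(2)] by blast
  show "cmod \<mu> \<le> lambda1" by (rule block_eigenvalue_le(1)[OF U eig \<open>\<exists>i. X i \<noteq> 0\<close>])
  show "\<exists>z. z \<noteq> 0 \<and> (\<forall>i. R i *v z = (\<mu> / complex_of_real lambda1) *s z)" if "cmod \<mu> = lambda1"
    using block_eigenvalue_eq_lambda1[OF U eig \<open>\<exists>i. X i \<noteq> 0\<close> that] by blast
qed

end

theorem mainTheorem6:
  fixes E :: "'n::finite \<Rightarrow> 'n \<Rightarrow> bool"
    and G :: "('g, 'b) monoid_scheme"
    and \<gamma> :: "'n \<Rightarrow> 'g"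
    and \<rho> :: "'g \<Rightarrow> complex^'k::finite^'k"
    and lambda1 :: real
  assumes graph: "simple_graph E" and conn: "graph_connected E"
    and pf_eig: "is_eigenvalue (adjacency E) (complex_of_real lambda1)" and pos: "lambda1 > 0"
    and pf_dom: "\<And>\<mu>. is_eigenvalue (adjacency E) \<mu> \<Longrightarrow> \<mu> \<noteq> complex_of_real lambda1 \<Longrightarrow> cmod \<mu> < lambda1"
    and grp: "group G" and fin: "finite (carrier G)"
    and gam: "\<And>v. \<gamma> v \<in> carrier G"
    and gen: "generate G (range \<gamma>) = carrier G"
    and irr: "irreducible_rep G \<rho>" and nontriv: "\<not> trivial_rep G \<rho>"
    and not_scalar: "\<not> (CARD('k) = 1 \<and> (\<forall>u v. \<rho> (\<gamma> u) = \<rho> (\<gamma> v)))"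
  shows "spec_radius (twisted_adj E (\<lambda>i. \<rho> (\<gamma> i))) < lambda1 \<and>
         (\<forall>i j. (\<lambda>N. op_norm (mat_pow (twisted_adj E (\<lambda>i. \<rho> (\<gamma> i))) N)
                      / real (card (walks E N i j))) \<longlonglongrightarrow> 0)"
proof -
  interpret perron_graph E lambda1 by (unfold_locales; fact)
  let ?R = "\<lambda>i. \<rho> (\<gamma> i)"
  have U: "unitary_mat (?R i)" for i using irr gam by (simp add: irreducible_rep_def unitary_rep_def)
  have "cmod \<mu> < lambda1" if eig: "is_eigenvalue (twisted_adj E ?R) \<mu>" for \<mu>
  proof (rule ccontr)
    assume "\<not> cmod \<mu> < lambda1"
    then obtain z where "z \<noteq> 0" and z: "\<And>i. ?R i *v z = (\<mu> / complex_of_real lambda1) *s z"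
      using twisted_adj_eigenvalue[OF U eig] by force
    have "CARD('k) = 1"
      using irreducible_rep_common_eigenvector_card_1[OF grp irr _ gen \<open>z \<noteq> 0\<close>] gam z by blast
    moreover have "?R u = ?R v" for u v
      using card_1_matrix_eqI[OF \<open>CARD('k) = 1\<close> \<open>z \<noteq> 0\<close>] z by metis
    ultimately show False using not_scalar by blast
  qed
  then have "spec_radius (twisted_adj E ?R) < lambda1" by (rule spec_radius_lessI)
  then show ?thesis using op_norm_pow_div_card_walks_tendsto_0 by blast
qed

end
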